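(* Let $\mathcal{S}_1,\dots,\mathcal{S}_n\subseteq\mathbb{R}^D$ be independent linear subspaces (i.e. $\sum_{\ell=1}^n d_\ell=\dim(\sum_\ell\mathcal{S}_\ell)$, $d_\ell=\dim\mathcal{S}_\ell$), and let $\mathcal{X}=\{\boldsymbol{x}_1,\dots,\boldsymbol{x}_N\}\subseteq\bigcup_\ell\mathcal{S}_\ell$ consist of unit-norm vectors such that each $\mathcal{S}_\ell$ contains at least $d_\ell$ points of $\mathcal{X}$ spanning $\mathcal{S}_\ell$. Let $k\ge\sum_{\ell=1}^n d_\ell$ and let $\mathcal{X}_0^{(k)}$ be the output of the farthest first search procedure: $\mathcal{X}_0^{(1)}=\{\boldsymbol{x}_j\}$ for an arbitrary (e.g. random) $j$, and for $i=1,\dots,k-1$, $\mathcal{X}_0^{(i+1)}=\mathcal{X}_0^{(i)}\cup\{\boldsymbol{x}\}$ where $\boldsymbol{x}\in\arg\max_{\boldsymbol{x}_j\in\mathcal{X}}f_\infty(\boldsymbol{x}_j,\mathcal{X}_0^{(i)})$. Then $\mathcal{X}_0^{(k)}$ contains at least $d_\ell$ linearly independent points from each $\mathcal{S}_\ell$, and with $\mathcal{X}_0=\mathcal{X}_0^{(k)}$ the problem defining $f_\infty(\boldsymbol{x}_j,\mathcal{X}_0^{(k)})$ is feasible for every $\boldsymbol{x}_j\in\mathcal{X}$ and all of its optimal solutions are subspace-preserving.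
   Context: For $\mathcal{X}_0\subseteq\mathcal{X}$ and $\boldsymbol{x}_j\in\mathcal{X}$, $f_\infty(\boldsymbol{x}_j,\mathcal{X}_0):=\min_{\boldsymbol{c}\in\mathbb{R}^N}\|\boldsymbol{c}\|_1$ subject to $\boldsymbol{x}_j=\sum_{i:\boldsymbol{x}_i\in\mathcal{X}_0}c_i\boldsymbol{x}_i$, with $f_\infty(\boldsymbol{x}_j,\mathcal{X}_0):=\infty$ if infeasible. A vector $\boldsymbol{c}\in\mathbb{R}^N$ associated with $\boldsymbol{x}_j$ is subspace-preserving if $c_i\neq0$ implies that $\boldsymbol{x}_i$ and $\boldsymbol{x}_j$ lie in the same subspace $\mathcal{S}_\ell$. *)

theory Defs
  imports "HOL-Analysis.Analysis"
begin

text \<open>Data points are x 1, ..., x N (a function on indices {1..N}); coefficient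
  vectors c in R^N are functions nat => real, only the entries with index in {1..N}
  matter.\<close>

definition feasible_coef ::
  "nat \<Rightarrow> (nat \<Rightarrow> 'a::euclidean_space) \<Rightarrow> 'a \<Rightarrow> 'a set \<Rightarrow> (nat \<Rightarrow> real) \<Rightarrow> bool" where
  "feasible_coef N x y X0 c \<longleftrightarrow>
     (\<forall>i\<in>{1..N}. c i \<noteq> 0 \<longrightarrow> x i \<in> X0) \<and> y = (\<Sum>i=1..N. c i *\<^sub>R x i)"

definition l1norm :: "nat \<Rightarrow> (nat \<Rightarrow> real) \<Rightarrow> real" where
  "l1norm N c = (\<Sum>i=1..N. \<bar>c i\<bar>)"

text \<open>f_infinity(y, X0): minimal l1 norm of a feasible c; infinity (Inf of the empty set
  in ereal) if infeasible.\<close>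
definition f_inf ::
  "nat \<Rightarrow> (nat \<Rightarrow> 'a::euclidean_space) \<Rightarrow> 'a \<Rightarrow> 'a set \<Rightarrow> ereal" where
  "f_inf N x y X0 = Inf {ereal (l1norm N c) | c. feasible_coef N x y X0 c}"

definition optimal_coef ::
  "nat \<Rightarrow> (nat \<Rightarrow> 'a::euclidean_space) \<Rightarrow> 'a \<Rightarrow> 'a set \<Rightarrow> (nat \<Rightarrow> real) \<Rightarrow> bool" where
  "optimal_coef N x y X0 c \<longleftrightarrow>
     feasible_coef N x y X0 c \<and> ereal (l1norm N c) = f_inf N x y X0"

definition subspace_preserving ::
  "nat \<Rightarrow> (nat \<Rightarrow> 'a::euclidean_space set) \<Rightarrow> nat \<Rightarrow> (nat \<Rightarrow> 'a) \<Rightarrow> 'a \<Rightarrow> (nat \<Rightarrow> real) \<Rightarrow> bool" where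
  "subspace_preserving n S N x y c \<longleftrightarrow>
     (\<forall>i\<in>{1..N}. c i \<noteq> 0 \<longrightarrow> (\<exists>l\<in>{1..n}. x i \<in> S l \<and> y \<in> S l))"

definition ffs_run ::
  "nat \<Rightarrow> (nat \<Rightarrow> 'a::euclidean_space) \<Rightarrow> nat \<Rightarrow> (nat \<Rightarrow> 'a set) \<Rightarrow> bool" where
  "ffs_run N x k X0 \<longleftrightarrow>
     (\<exists>j0\<in>{1..N}. X0 1 = {x j0}) \<and>
     (\<forall>i\<in>{1..k-1}. \<exists>j\<in>{1..N}. X0 (i+1) = X0 i \<union> {x j} \<and>
        (\<forall>j'\<in>{1..N}. f_inf N x (x j') (X0 i) \<le> f_inf N x (x j) (X0 i)))"

end

theory Submission
  imports Defs
begin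

text \<open>As long as the chosen points do not span all data, some data point has
  \<open>f_inf = \<infinity>\<close>, so the arg max lies outside their span and every step of farthest first
  search raises the dimension by one. After \<open>k \<ge> \<Sum>l. dim (S l)\<close> steps the chosen points
  therefore span every \<open>S l\<close>, and independence of the subspaces forces them to contain
  \<open>dim (S l)\<close> independent points of each \<open>S l\<close>. For subspace preservation, split an
  optimal \<open>c\<close> for \<open>x j \<in> S m\<close> into its part on \<open>S m\<close> and the rest: the rest sums to a
  vector in \<open>S m \<inter> span (\<Union>l\<noteq>m. S l) = {0}\<close>, so dropping it gives a feasible vector
  of strictly smaller \<open>\<ell>\<^sub>1\<close> norm unless it is already zero.\<close>

lemma dim_Un_le: "dim (A \<union> B) \<le> dim A + dim (B :: 'a::euclidean_space set)"
proof -
  have "dim (A \<union> B) = dim {a + b |a b. a \<in> span A \<and> b \<in> span B}"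
    by (simp flip: span_Un)
  also have "\<dots> \<le> dim (span A) + dim (span B)"
    using dim_sums_Int[of "span A" "span B"] by simp
  finally show ?thesis by simp
qed

lemma dim_UN_le:
  fixes A :: "'i \<Rightarrow> 'a::euclidean_space set"
  assumes "finite L"
  shows "dim (\<Union>l\<in>L. A l) \<le> (\<Sum>l\<in>L. dim (A l))"
  using assms
proof (induction L rule: finite_induct)
  case (insert a L)
  have "dim (\<Union>l\<in>insert a L. A l) \<le> dim (A a) + dim (\<Union>l\<in>L. A l)"
    using dim_Un_le[of "A a"] by simp
  with insert show ?case by simp
qed simp

lemma independent_subspaces_Int_span_others:
  fixes S :: "'i \<Rightarrow> 'a::euclidean_space set"
  assumes "finite L" "m \<in> L" "\<forall>l\<in>L. subspace (S l)"
    and indep: "(\<Sum>l\<in>L. dim (S l)) = dim (span (\<Union>l\<in>L. S l))"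
  shows "S m \<inter> span (\<Union>l\<in>L - {m}. S l) \<subseteq> {0}"
proof -
  let ?R = "span (\<Union>l\<in>L - {m}. S l)"
  have Sm: "subspace (S m)" using assms(2,3) by blast
  have "(\<Union>l\<in>L. S l) = S m \<union> (\<Union>l\<in>L - {m}. S l)" using assms(2) by blast
  then have "span (\<Union>l\<in>L. S l) = {a + b |a b. a \<in> S m \<and> b \<in> ?R}"
    by (simp only: span_Un span_eq_iff[THEN iffD2, OF Sm])
  then have "dim (span (\<Union>l\<in>L. S l)) + dim (S m \<inter> ?R) = dim (S m) + dim ?R"
    using dim_sums_Int[OF Sm subspace_span] by simp
  moreover have "dim ?R \<le> (\<Sum>l\<in>L - {m}. dim (S l))"
    using dim_UN_le[of "L - {m}" S] assms(1) by simp
  moreover have "(\<Sum>l\<in>L. dim (S l)) = dim (S m) + (\<Sum>l\<in>L - {m}. dim (S l))"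
    using sum.remove[OF assms(1,2)] by simp
  ultimately have "dim (S m \<inter> ?R) = 0" using indep by linarith
  then show ?thesis by simp
qed

lemma independent_subspaces_dim_Int:
  fixes S :: "'i \<Rightarrow> 'a::euclidean_space set"
  assumes "finite L" "m \<in> L"
    and indep: "(\<Sum>l\<in>L. dim (S l)) = dim (span (\<Union>l\<in>L. S l))"
    and "X \<subseteq> (\<Union>l\<in>L. S l)" "(\<Union>l\<in>L. S l) \<subseteq> span X"
  shows "dim (X \<inter> S m) = dim (S m)"
proof (rule sum_mono_inv[OF _ _ assms(2,1)])
  show le: "dim (X \<inter> S l) \<le> dim (S l)" for l by (simp add: dim_subset)
  have "(\<Sum>l\<in>L. dim (S l)) \<le> dim X"
    using indep dim_mono[OF assms(5)] by simp
  also have "\<dots> \<le> dim (\<Union>l\<in>L. X \<inter> S l)" using assms(4) by (intro dim_subset) blast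
  also have "\<dots> \<le> (\<Sum>l\<in>L. dim (X \<inter> S l))" using dim_UN_le[OF assms(1)] .
  finally show "(\<Sum>l\<in>L. dim (X \<inter> S l)) = (\<Sum>l\<in>L. dim (S l))"
    using sum_mono[of L "\<lambda>l. dim (X \<inter> S l)", OF le] by (rule antisym[rotated])
qed

lemma independent_subspaces_Int_contains_basis:
  fixes S :: "'i \<Rightarrow> 'a::euclidean_space set"
  assumes "finite L" "m \<in> L"
    and "(\<Sum>l\<in>L. dim (S l)) = dim (span (\<Union>l\<in>L. S l))"
    and "X \<subseteq> (\<Union>l\<in>L. S l)" "(\<Union>l\<in>L. S l) \<subseteq> span X"
  shows "\<exists>T. T \<subseteq> X \<inter> S m \<and> finite T \<and> independent T \<and> card T \<ge> dim (S m)"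
proof -
  obtain T where T: "T \<subseteq> X \<inter> S m" "independent T" "card T = dim (X \<inter> S m)"
    using basis_exists by metis
  moreover have "finite T" using T(2) by (rule finiteI_independent)
  ultimately show ?thesis
    using independent_subspaces_dim_Int[OF assms] by (intro exI[of _ T]) simp
qed

lemma feasible_coef_imp_in_span:
  assumes "feasible_coef N x y X0 c"
  shows "y \<in> span X0"
proof -
  have "c i *\<^sub>R x i \<in> span X0" if "i \<in> {1..N}" for i
    using assms that unfolding feasible_coef_def
    by (cases "c i = 0") (auto simp: span_zero span_base span_scale)
  then show ?thesis using assms unfolding feasible_coef_def by (auto intro: span_sum)
qed

lemma in_span_imp_feasible_coef:
  assumes "X0 \<subseteq> x ` {1..N}" "y \<in> span X0"
  shows "\<exists>c. feasible_coef N x y X0 c"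
  using assms(2)
proof (induction rule: span_induct_alt)
  case base
  show ?case by (auto simp: feasible_coef_def)
next
  case (step a v y)
  obtain c where c: "feasible_coef N x y X0 c" using step.IH by blast
  obtain i0 where i0: "i0 \<in> {1..N}" "v = x i0" using step.hyps assms(1) by blast
  let ?c = "\<lambda>i. c i + (if i = i0 then a else 0)"
  have "(\<Sum>i=1..N. ?c i *\<^sub>R x i) = (\<Sum>i=1..N. c i *\<^sub>R x i + (if i = i0 then a *\<^sub>R x i else 0))"
    by (intro sum.cong) (auto simp: scaleR_add_left)
  also have "\<dots> = a *\<^sub>R v + y"
    using c i0 by (simp add: feasible_coef_def sum.distrib)
  finally have "(\<Sum>i=1..N. ?c i *\<^sub>R x i) = a *\<^sub>R v + y" .
  moreover have "x i \<in> X0" if "i \<in> {1..N}" "?c i \<noteq> 0" for i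
    using c that i0 step.hyps unfolding feasible_coef_def by (cases "i = i0") auto
  ultimately have "feasible_coef N x (a *\<^sub>R v + y) X0 ?c"
    unfolding feasible_coef_def by auto
  then show ?case by blast
qed

lemma f_inf_less_top_iff: "f_inf N x y X0 < \<infinity> \<longleftrightarrow> (\<exists>c. feasible_coef N x y X0 c)"
proof
  assume less_top: "f_inf N x y X0 < \<infinity>"
  show "\<exists>c. feasible_coef N x y X0 c"
  proof (rule ccontr)
    assume "\<nexists>c. feasible_coef N x y X0 c"
    then have "f_inf N x y X0 = \<infinity>" unfolding f_inf_def by (simp add: top_ereal_def)
    with less_top show False by simp
  qed
next
  assume "\<exists>c. feasible_coef N x y X0 c"
  then obtain c where "feasible_coef N x y X0 c" by blast
  then have "f_inf N x y X0 \<le> ereal (l1norm N c)"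
    unfolding f_inf_def by (intro Inf_lower) blast
  then show "f_inf N x y X0 < \<infinity>" by (rule order.strict_trans1) simp
qed

lemma f_inf_less_top_iff_in_span:
  assumes "X0 \<subseteq> x ` {1..N}"
  shows "f_inf N x y X0 < \<infinity> \<longleftrightarrow> y \<in> span X0"
  using f_inf_less_top_iff feasible_coef_imp_in_span in_span_imp_feasible_coef[OF assms] by blast

lemma arg_max_f_inf_notin_span:
  assumes "X \<subseteq> x ` {1..N}" and "\<not> x ` {1..N} \<subseteq> span X"
    and arg_max: "\<forall>j'\<in>{1..N}. f_inf N x (x j') X \<le> f_inf N x (x j) X"
  shows "x j \<notin> span X"
proof -
  obtain j' where "j' \<in> {1..N}" "x j' \<notin> span X" using assms(2) by blast
  then have "\<not> f_inf N x (x j') X < \<infinity>" using f_inf_less_top_iff_in_span[OF assms(1)] by blast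
  then have "\<not> f_inf N x (x j) X < \<infinity>" using arg_max \<open>j' \<in> {1..N}\<close> by (meson le_less_trans)
  then show ?thesis using f_inf_less_top_iff_in_span[OF assms(1)] by blast
qed

lemma ffs_run_dim_grows:
  assumes ffs: "ffs_run N x k X0" and nz: "\<forall>i\<in>{1..N}. x i \<noteq> 0"
    and "1 \<le> i" "i \<le> k"
  shows "X0 i \<subseteq> x ` {1..N} \<and> (x ` {1..N} \<subseteq> span (X0 i) \<or> i \<le> dim (X0 i))"
  using assms(3,4)
proof (induction i rule: dec_induct)
  case base
  obtain j0 where "j0 \<in> {1..N}" "X0 1 = {x j0}" using ffs unfolding ffs_run_def by blast
  then show ?case using nz by auto
next
  case (step i)
  then have IH: "X0 i \<subseteq> x ` {1..N}" "x ` {1..N} \<subseteq> span (X0 i) \<or> i \<le> dim (X0 i)"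
    by simp_all
  from step have "i \<in> {1..k-1}" by simp
  then obtain j where j: "j \<in> {1..N}" "X0 (i+1) = X0 i \<union> {x j}"
    "\<forall>j'\<in>{1..N}. f_inf N x (x j') (X0 i) \<le> f_inf N x (x j) (X0 i)"
    using ffs unfolding ffs_run_def by blast
  have insert: "X0 (Suc i) = insert (x j) (X0 i)" using j(2) by simp
  have "X0 (Suc i) \<subseteq> x ` {1..N}" using IH(1) j(1) insert by auto
  moreover have "x ` {1..N} \<subseteq> span (X0 (Suc i)) \<or> Suc i \<le> dim (X0 (Suc i))"
  proof (cases "x ` {1..N} \<subseteq> span (X0 i)")
    case True
    then show ?thesis using insert span_mono[of "X0 i" "X0 (Suc i)"] by blast
  next
    case False
    then have "x j \<notin> span (X0 i)" using arg_max_f_inf_notin_span[OF IH(1) _ j(3)] by blast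
    then show ?thesis using IH(2) False insert dim_insert[of "x j" "X0 i"] by simp
  qed
  ultimately show ?case by blast
qed

lemma ffs_run_spans_data:
  assumes ffs: "ffs_run N x k X0" and nz: "\<forall>i\<in>{1..N}. x i \<noteq> 0"
    and k: "dim (x ` {1..N}) \<le> k"
  shows "X0 k \<subseteq> x ` {1..N}" "span (X0 k) = span (x ` {1..N})"
proof -
  obtain j0 where "j0 \<in> {1..N}" using ffs unfolding ffs_run_def by blast
  then have "dim {x j0} \<le> dim (x ` {1..N})" by (intro dim_subset) blast
  then have "1 \<le> k" using k nz \<open>j0 \<in> {1..N}\<close> by simp
  then have grown: "X0 k \<subseteq> x ` {1..N}" "x ` {1..N} \<subseteq> span (X0 k) \<or> k \<le> dim (X0 k)"
    using ffs_run_dim_grows[OF ffs nz] by auto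
  then show "X0 k \<subseteq> x ` {1..N}" by blast
  show "span (X0 k) = span (x ` {1..N})"
  proof (cases "x ` {1..N} \<subseteq> span (X0 k)")
    case True
    then show ?thesis
      unfolding span_eq using grown(1) span_superset[of "x ` {1..N}"] by blast
  next
    case False
    then have "dim (x ` {1..N}) \<le> dim (X0 k)" using grown(2) k by simp
    then show ?thesis by (rule dim_eq_span[OF grown(1)])
  qed
qed

lemma feasible_coef_restrict_to_subspace:
  assumes V: "subspace V" and "V \<inter> span R \<subseteq> {0}" "y \<in> V"
    and split: "\<forall>i\<in>{1..N}. x i \<in> V \<or> x i \<in> R"
    and feas: "feasible_coef N x y X0 c"
  shows "feasible_coef N x y X0 (\<lambda>i. if x i \<in> V then c i else 0)"
proof -
  define v where "v = (\<Sum>i=1..N. if x i \<in> V then c i *\<^sub>R x i else 0)"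
  define w where "w = (\<Sum>i=1..N. if x i \<in> V then 0 else c i *\<^sub>R x i)"
  have "y = v + w"
    using feas unfolding feasible_coef_def v_def w_def sum.distrib[symmetric]
    by (auto intro: sum.cong)
  moreover have "v \<in> V"
    unfolding v_def by (intro subspace_sum[OF V]) (simp add: subspace_0[OF V] subspace_scale[OF V])
  ultimately have "w \<in> V" using \<open>y \<in> V\<close> subspace_diff[OF V] by force
  moreover have "w \<in> span R"
    unfolding w_def using split by (auto simp: span_zero span_base span_scale intro!: span_sum)
  ultimately have "w = 0" using assms(2) by blast
  then have "y = (\<Sum>i=1..N. (if x i \<in> V then c i else 0) *\<^sub>R x i)"
    using \<open>y = v + w\<close> unfolding v_def by (auto intro: sum.cong)
  then show ?thesis using feas unfolding feasible_coef_def by auto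
qed

lemma optimal_coef_supported_in_subspace:
  assumes "subspace V" "V \<inter> span R \<subseteq> {0}" "y \<in> V"
    and "\<forall>i\<in>{1..N}. x i \<in> V \<or> x i \<in> R"
    and opt: "optimal_coef N x y X0 c"
    and "i \<in> {1..N}" "c i \<noteq> 0"
  shows "x i \<in> V"
proof (rule ccontr)
  assume "x i \<notin> V"
  let ?c = "\<lambda>i. if x i \<in> V then c i else 0"
  have "feasible_coef N x y X0 ?c"
    using feasible_coef_restrict_to_subspace assms opt unfolding optimal_coef_def by blast
  then have "ereal (l1norm N c) \<le> ereal (l1norm N ?c)"
    using opt unfolding optimal_coef_def f_inf_def by (auto intro: Inf_lower)
  moreover have "l1norm N ?c < l1norm N c"
    unfolding l1norm_def using \<open>x i \<notin> V\<close> assms(6,7)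
    by (intro sum_strict_mono_ex1) auto
  ultimately show False by simp
qed

lemma optimal_coef_subspace_preserving:
  assumes subsp: "\<forall>l\<in>{1..n}. subspace (S l)"
    and indep: "(\<Sum>l=1..n. dim (S l)) = dim (span (\<Union>l\<in>{1..n}. S l))"
    and in_union: "\<forall>i\<in>{1..N}. \<exists>l\<in>{1..n}. x i \<in> S l"
    and "j \<in> {1..N}" and opt: "optimal_coef N x (x j) X0 c"
  shows "subspace_preserving n S N x (x j) c"
proof -
  obtain m where m: "m \<in> {1..n}" "x j \<in> S m" using in_union \<open>j \<in> {1..N}\<close> by blast
  have Sm: "subspace (S m)" using subsp m(1) by blast
  have split: "\<forall>i\<in>{1..N}. x i \<in> S m \<or> x i \<in> (\<Union>l\<in>{1..n} - {m}. S l)"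
    using in_union by blast
  show ?thesis
    using optimal_coef_supported_in_subspace[OF Sm
        independent_subspaces_Int_span_others[OF finite_atLeastAtMost m(1) subsp indep]
        m(2) split opt] m
    unfolding subspace_preserving_def by blast
qed

theorem theorem2:
  fixes S :: "nat \<Rightarrow> 'a::euclidean_space set" and n :: nat
    and x :: "nat \<Rightarrow> 'a" and N :: nat and k :: nat
    and X0 :: "nat \<Rightarrow> 'a set"
  assumes subsp: "\<forall>l\<in>{1..n}. subspace (S l)"
    and indep: "(\<Sum>l=1..n. dim (S l)) = dim (span (\<Union>l\<in>{1..n}. S l))"
    and in_union: "\<forall>i\<in>{1..N}. \<exists>l\<in>{1..n}. x i \<in> S l"
    and unit: "\<forall>i\<in>{1..N}. norm (x i) = 1"
    and spanning: "\<forall>l\<in>{1..n}. \<exists>T. T \<subseteq> x ` {1..N} \<inter> S l \<and> finite T \<and>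
                      card T \<ge> dim (S l) \<and> span T = S l"
    and k_ge: "k \<ge> (\<Sum>l=1..n. dim (S l))"
    and ffs: "ffs_run N x k X0"
  shows "(\<forall>l\<in>{1..n}. \<exists>T. T \<subseteq> X0 k \<inter> S l \<and> finite T \<and> independent T \<and>
                      card T \<ge> dim (S l))
    \<and> (\<forall>j\<in>{1..N}. (\<exists>c. feasible_coef N x (x j) (X0 k) c) \<and>
          (\<forall>c. optimal_coef N x (x j) (X0 k) c \<longrightarrow> subspace_preserving n S N x (x j) c))"
proof -
  have nz: "\<forall>i\<in>{1..N}. x i \<noteq> 0" using unit by force
  have data_U: "x ` {1..N} \<subseteq> (\<Union>l\<in>{1..n}. S l)" using in_union by auto
  then have "dim (x ` {1..N}) \<le> dim (\<Union>l\<in>{1..n}. S l)" by (rule dim_subset)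
  also have "\<dots> = (\<Sum>l=1..n. dim (S l))" using indep by simp
  also have "\<dots> \<le> k" by (rule k_ge)
  finally have data: "X0 k \<subseteq> x ` {1..N}" "span (X0 k) = span (x ` {1..N})"
    by (rule ffs_run_spans_data[OF ffs nz])+
  have U_span: "(\<Union>l\<in>{1..n}. S l) \<subseteq> span (X0 k)"
  proof (rule UN_least)
    fix l assume "l \<in> {1..n}"
    then obtain T where "T \<subseteq> x ` {1..N} \<inter> S l" "span T = S l"
      using spanning by blast
    then show "S l \<subseteq> span (X0 k)" using span_mono[of T "x ` {1..N}"] data(2) by auto
  qed
  have X0_U: "X0 k \<subseteq> (\<Union>l\<in>{1..n}. S l)" using data(1) data_U by (rule order_trans)
  show ?thesis
  proof (intro conjI ballI allI impI)
    fix l assume "l \<in> {1..n}"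
    then show "\<exists>T. T \<subseteq> X0 k \<inter> S l \<and> finite T \<and> independent T \<and> card T \<ge> dim (S l)"
      by (rule independent_subspaces_Int_contains_basis[OF finite_atLeastAtMost _ indep X0_U U_span])
  next
    fix j assume "j \<in> {1..N}"
    then have "x j \<in> span (X0 k)" unfolding data(2) by (intro span_base) blast
    then show "\<exists>c. feasible_coef N x (x j) (X0 k) c" by (rule in_span_imp_feasible_coef[OF data(1)])
  next
    fix j c assume "j \<in> {1..N}" "optimal_coef N x (x j) (X0 k) c"
    then show "subspace_preserving n S N x (x j) c"
      by (rule optimal_coef_subspace_preserving[OF subsp indep in_union])
  qed
qed

end
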